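(* Let $Q$ be a finite quiver. Every unital semisimple subalgebra of the path algebra $\Bbbk Q$ is isomorphic to $\Bbbk^n$ for some $n$.
   Context: $\Bbbk$ is an algebraically closed field of characteristic zero. $\Bbbk Q$ has as basis all paths in $Q$ of length $\ge0$, with multiplication by concatenation (zero if not composable); its unit is the sum of the vertex idempotents. A unital subalgebra contains the unit $1$ of $\Bbbk Q$. *)

theory Defs
  imports "HOL-Computational_Algebra.Polynomial"
begin

definition alg_closed :: "('k::field) itself \<Rightarrow> bool" where
  "alg_closed _ \<longleftrightarrow> (\<forall>p::'k poly. degree p > 0 \<longrightarrow> (\<exists>x. poly p x = 0))"

text \<open>A path is a pair (v, as): a start vertex v and a list of arrows as (length 0 gives the trivial path e_v).\<close>

type_synonym ('v,'e) qpath = "'v \<times> 'e list"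

fun arrows_chain :: "('e \<Rightarrow> 'v) \<Rightarrow> ('e \<Rightarrow> 'v) \<Rightarrow> 'v \<Rightarrow> 'e list \<Rightarrow> bool" where
  "arrows_chain src tgt v [] = True"
| "arrows_chain src tgt v (a # as) = (src a = v \<and> arrows_chain src tgt (tgt a) as)"

definition valid_path :: "('e \<Rightarrow> 'v) \<Rightarrow> ('e \<Rightarrow> 'v) \<Rightarrow> ('v,'e) qpath \<Rightarrow> bool" where
  "valid_path src tgt p \<longleftrightarrow> arrows_chain src tgt (fst p) (snd p)"

definition path_vertex :: "('e \<Rightarrow> 'v) \<Rightarrow> ('v,'e) qpath \<Rightarrow> nat \<Rightarrow> 'v" where
  "path_vertex tgt p k = (if k = 0 then fst p else tgt (snd p ! (k - 1)))"

definition path_alg :: "('e \<Rightarrow> 'v) \<Rightarrow> ('e \<Rightarrow> 'v) \<Rightarrow> (('v,'e) qpath \<Rightarrow> 'k::field) set" where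
  "path_alg src tgt = {f. finite {p. f p \<noteq> 0} \<and> (\<forall>p. f p \<noteq> 0 \<longrightarrow> valid_path src tgt p)}"

definition pa_mult :: "('e \<Rightarrow> 'v) \<Rightarrow> ('e \<Rightarrow> 'v) \<Rightarrow> (('v,'e) qpath \<Rightarrow> 'k::field)
    \<Rightarrow> (('v,'e) qpath \<Rightarrow> 'k) \<Rightarrow> ('v,'e) qpath \<Rightarrow> 'k" where
  "pa_mult src tgt f g p =
     (if valid_path src tgt p then
        (\<Sum>k\<le>length (snd p). f (fst p, take k (snd p)) * g (path_vertex tgt p k, drop k (snd p)))
      else 0)"

definition pa_one :: "('v,'e) qpath \<Rightarrow> 'k::field" where
  "pa_one p = (if snd p = [] then 1 else 0)"

definition pa_add :: "('p \<Rightarrow> 'k::field) \<Rightarrow> ('p \<Rightarrow> 'k) \<Rightarrow> 'p \<Rightarrow> 'k" where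
  "pa_add f g = (\<lambda>p. f p + g p)"

definition pa_smult :: "'k::field \<Rightarrow> ('p \<Rightarrow> 'k) \<Rightarrow> 'p \<Rightarrow> 'k" where
  "pa_smult c f = (\<lambda>p. c * f p)"

definition pa_neg :: "('p \<Rightarrow> 'k::field) \<Rightarrow> 'p \<Rightarrow> 'k" where
  "pa_neg f = (\<lambda>p. - f p)"

definition unital_subalgebra :: "('e \<Rightarrow> 'v) \<Rightarrow> ('e \<Rightarrow> 'v) \<Rightarrow> (('v,'e) qpath \<Rightarrow> 'k::field) set \<Rightarrow> bool" where
  "unital_subalgebra src tgt A \<longleftrightarrow>
     A \<subseteq> path_alg src tgt \<and> (\<lambda>_. 0) \<in> A \<and> pa_one \<in> A \<and>
     (\<forall>x\<in>A. \<forall>y\<in>A. pa_add x y \<in> A) \<and>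
     (\<forall>c. \<forall>x\<in>A. pa_smult c x \<in> A) \<and>
     (\<forall>x\<in>A. \<forall>y\<in>A. pa_mult src tgt x y \<in> A)"

definition left_ideal_in :: "('e \<Rightarrow> 'v) \<Rightarrow> ('e \<Rightarrow> 'v) \<Rightarrow> (('v,'e) qpath \<Rightarrow> 'k::field) set
    \<Rightarrow> (('v,'e) qpath \<Rightarrow> 'k) set \<Rightarrow> bool" where
  "left_ideal_in src tgt A L \<longleftrightarrow>
     L \<subseteq> A \<and> (\<lambda>_. 0) \<in> L \<and>
     (\<forall>x\<in>L. \<forall>y\<in>L. pa_add x y \<in> L) \<and> (\<forall>x\<in>L. pa_neg x \<in> L) \<and>
     (\<forall>a\<in>A. \<forall>x\<in>L. pa_mult src tgt a x \<in> L)"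

definition semisimple_subalg :: "('e \<Rightarrow> 'v) \<Rightarrow> ('e \<Rightarrow> 'v) \<Rightarrow> (('v,'e) qpath \<Rightarrow> 'k::field) set \<Rightarrow> bool" where
  "semisimple_subalg src tgt A \<longleftrightarrow>
     (\<forall>L. left_ideal_in src tgt A L \<longrightarrow>
        (\<exists>L'. left_ideal_in src tgt A L' \<and> L \<inter> L' = {\<lambda>_. 0} \<and>
              {pa_add x y | x y. x \<in> L \<and> y \<in> L'} = A))"

text \<open>A is isomorphic (as a unital k-algebra) to k^n, modelled as functions nat \<Rightarrow> k vanishing
  outside {..<n} with componentwise operations.\<close>
definition iso_to_kn :: "('e \<Rightarrow> 'v) \<Rightarrow> ('e \<Rightarrow> 'v) \<Rightarrow> (('v,'e) qpath \<Rightarrow> 'k::field) set \<Rightarrow> nat \<Rightarrow> bool" where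
  "iso_to_kn src tgt A n \<longleftrightarrow>
     (\<exists>\<phi> :: (('v,'e) qpath \<Rightarrow> 'k) \<Rightarrow> nat \<Rightarrow> 'k.
        bij_betw \<phi> A {u. \<forall>i\<ge>n. u i = 0} \<and>
        (\<forall>x\<in>A. \<forall>y\<in>A. \<phi> (pa_add x y) = (\<lambda>i. \<phi> x i + \<phi> y i)) \<and>
        (\<forall>c. \<forall>x\<in>A. \<phi> (pa_smult c x) = (\<lambda>i. c * \<phi> x i)) \<and>
        (\<forall>x\<in>A. \<forall>y\<in>A. \<phi> (pa_mult src tgt x y) = (\<lambda>i. \<phi> x i * \<phi> y i)) \<and>
        \<phi> pa_one = (\<lambda>i. if i < n then 1 else 0))"

end

theory Submission
  imports Defs
begin

text \<open>Reading off the coefficients of the trivial paths is a unital algebra map from \<open>A\<close> into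
  \<open>\<Bbbk>\<^sup>Q\<^sub>0\<close>. Its kernel \<open>K\<close> is a left ideal; by semisimplicity it has a complement, so
  writing \<open>1 = e + f\<close> with \<open>e \<in> K\<close> gives \<open>x = x e\<close> for all \<open>x \<in> K\<close>. As \<open>e\<close> has no
  trivial-path component, induction on path length forces \<open>x = 0\<close>. Hence \<open>A\<close> is a unital
  subalgebra of the pointwise algebra \<open>\<Bbbk>\<^sup>Q\<^sub>0\<close>, and such a subalgebra is \<open>\<Bbbk>\<^sup>n\<close> with \<open>n\<close> the
  number of classes of vertices that \<open>A\<close> does not separate: the indicator function of each
  class is a product of affine functions in the subalgebra.\<close>

definition pointwise_subalgebra :: "('v \<Rightarrow> 'k::field) set \<Rightarrow> bool" where
  "pointwise_subalgebra B \<longleftrightarrow>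
     (\<lambda>_. 1) \<in> B \<and>
     (\<forall>b\<in>B. \<forall>c\<in>B. (\<lambda>v. b v + c v) \<in> B) \<and>
     (\<forall>a. \<forall>b\<in>B. (\<lambda>v. a * b v) \<in> B) \<and>
     (\<forall>b\<in>B. \<forall>c\<in>B. (\<lambda>v. b v * c v) \<in> B)"

lemma
  assumes "pointwise_subalgebra B"
  shows pointwise_subalgebra_one: "(\<lambda>_. 1) \<in> B"
    and pointwise_subalgebra_add: "b \<in> B \<Longrightarrow> c \<in> B \<Longrightarrow> (\<lambda>v. b v + c v) \<in> B"
    and pointwise_subalgebra_scale: "b \<in> B \<Longrightarrow> (\<lambda>v. a * b v) \<in> B"
    and pointwise_subalgebra_mult: "b \<in> B \<Longrightarrow> c \<in> B \<Longrightarrow> (\<lambda>v. b v * c v) \<in> B"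
  using assms unfolding pointwise_subalgebra_def by blast+

lemma pointwise_subalgebra_const:
  assumes "pointwise_subalgebra B"
  shows "(\<lambda>_. a) \<in> B"
  using pointwise_subalgebra_scale[OF assms pointwise_subalgebra_one[OF assms], of a] by simp

lemma pointwise_subalgebra_sum:
  assumes B: "pointwise_subalgebra B" and "finite I" and "\<And>i. i \<in> I \<Longrightarrow> f i \<in> B"
  shows "(\<lambda>v. \<Sum>i\<in>I. f i v) \<in> B"
  using assms(2,3)
proof (induction I rule: finite_induct)
  case empty
  show ?case using pointwise_subalgebra_const[OF B] by simp
next
  case (insert i I)
  then show ?case using pointwise_subalgebra_add[OF B] by simp
qed

lemma pointwise_subalgebra_prod:
  assumes B: "pointwise_subalgebra B" and "finite I" and "\<And>i. i \<in> I \<Longrightarrow> f i \<in> B"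
  shows "(\<lambda>v. \<Prod>i\<in>I. f i v) \<in> B"
  using assms(2,3)
proof (induction I rule: finite_induct)
  case empty
  show ?case using pointwise_subalgebra_one[OF B] by simp
next
  case (insert i I)
  then show ?case using pointwise_subalgebra_mult[OF B] by simp
qed

lemma pointwise_subalgebra_indicator:
  fixes B :: "('v::finite \<Rightarrow> 'k::field) set"
  assumes B: "pointwise_subalgebra B"
  shows "(\<lambda>v. if \<forall>b\<in>B. b v = b r then 1 else 0) \<in> B"
proof -
  let ?sim = "\<lambda>v. \<forall>b\<in>B. b v = b r"
  have "\<exists>c\<in>B. c w = 0 \<and> (\<forall>v. ?sim v \<longrightarrow> c v = 1)" if "\<not> ?sim w" for w
  proof -
    obtain b where b: "b \<in> B" "b w \<noteq> b r" using \<open>\<not> ?sim w\<close> by blast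
    define c where "c v = (1 / (b r - b w)) * (b v - b w)" for v
    have "c \<in> B"
      unfolding c_def[abs_def] diff_conv_add_uminus
      by (intro pointwise_subalgebra_scale[OF B] pointwise_subalgebra_add[OF B]
          pointwise_subalgebra_const[OF B] b(1))
    moreover have "c w = 0" by (simp add: c_def)
    moreover have "c v = 1" if "?sim v" for v
      using that b by (simp add: c_def)
    ultimately show ?thesis by blast
  qed
  then obtain c where c: "\<And>w. \<not> ?sim w \<Longrightarrow> c w \<in> B \<and> c w w = 0 \<and> (\<forall>v. ?sim v \<longrightarrow> c w v = 1)"
    by metis
  have "(\<lambda>v. \<Prod>w\<in>{w. \<not> ?sim w}. c w v) \<in> B"
    by (rule pointwise_subalgebra_prod[OF B]) (use c in auto)
  also have "(\<lambda>v. \<Prod>w\<in>{w. \<not> ?sim w}. c w v) = (\<lambda>v. if ?sim v then 1 else 0)"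
    using c by (auto simp: fun_eq_iff prod_zero_iff)
  finally show ?thesis .
qed

lemma finite_range_enumeration:
  fixes f :: "'a \<Rightarrow> 'b"
  assumes "finite (range f)"
  obtains h :: "nat \<Rightarrow> 'a" and n where "bij_betw (f \<circ> h) {..<n} (range f)"
proof -
  obtain c where "bij_betw c {0..<card (range f)} (range f)"
    using ex_bij_betw_nat_finite[OF assms] by blast
  then have c: "bij_betw c {..<card (range f)} (range f)"
    by (simp only: atLeast0LessThan)
  have "bij_betw (f \<circ> (inv f \<circ> c)) {..<card (range f)} (range f)"
  proof (rule bij_betw_cong[THEN iffD1, OF _ c])
    fix a assume "a \<in> {..<card (range f)}"
    then have "c a \<in> range f" by (rule bij_betw_apply[OF c])
    then show "c a = (f \<circ> (inv f \<circ> c)) a" by (simp add: f_inv_into_f)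
  qed
  then show thesis by (rule that)
qed

lemma pointwise_subalgebra_eval_bij_betw:
  fixes B :: "('v::finite \<Rightarrow> 'k::field) set" and n :: nat
  assumes B: "pointwise_subalgebra B"
    and cover: "\<And>v. \<exists>i<n. \<forall>b\<in>B. b v = b (h i)"
    and distinct: "\<And>i j. i < n \<Longrightarrow> j < n \<Longrightarrow> \<forall>b\<in>B. b (h i) = b (h j) \<Longrightarrow> i = j"
  shows "bij_betw (\<lambda>b i. if i < n then b (h i) else 0) B {u. \<forall>i\<ge>n. u i = 0}"
    (is "bij_betw ?ev _ _")
proof -
  have "inj_on ?ev B"
  proof (rule inj_onI)
    fix b c assume b: "b \<in> B" and c: "c \<in> B" and eq: "?ev b = ?ev c"
    have "b v = c v" for v
    proof -
      obtain i where "i < n" and "\<forall>b\<in>B. b v = b (h i)" using cover by blast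
      with b c fun_cong[OF eq, of i] show ?thesis by (metis (no_types, lifting))
    qed
    then show "b = c" by blast
  qed
  moreover have "{u. \<forall>i\<ge>n. u i = 0} \<subseteq> ?ev ` B"
  proof
    fix u :: "nat \<Rightarrow> 'k" assume u: "u \<in> {u. \<forall>i\<ge>n. u i = 0}"
    define E where "E i v = (if \<forall>b\<in>B. b v = b (h i) then 1 else (0::'k))" for i v
    have "E i \<in> B" for i
      unfolding E_def[abs_def] by (rule pointwise_subalgebra_indicator[OF B])
    then have "(\<lambda>v. \<Sum>i<n. u i * E i v) \<in> B"
      by (intro pointwise_subalgebra_sum[OF B] pointwise_subalgebra_scale[OF B]) simp_all
    moreover have "(\<Sum>i<n. u i * E i (h j)) = u j" if "j < n" for j
    proof -
      have "(\<Sum>i<n. u i * E i (h j)) = (\<Sum>i<n. if i = j then u i else 0)"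
        by (rule sum.cong) (use distinct that in \<open>auto simp: E_def\<close>)
      with that show ?thesis by simp
    qed
    ultimately show "u \<in> ?ev ` B"
      using u by (intro image_eqI[of _ _ "\<lambda>v. \<Sum>i<n. u i * E i v"]) (auto simp: fun_eq_iff)
  qed
  ultimately show ?thesis by (force simp: bij_betw_def)
qed

lemma pointwise_subalgebra_eval_bij:
  fixes B :: "('v::finite \<Rightarrow> 'k::field) set"
  assumes B: "pointwise_subalgebra B"
  obtains n :: nat and h :: "nat \<Rightarrow> 'v"
  where "bij_betw (\<lambda>b i. if i < n then b (h i) else 0) B {u. \<forall>i\<ge>n. u i = 0}"
proof -
  define sig where "sig v = (\<lambda>b. if b \<in> B then b v else 0)" for v
  have sig_eq: "sig v = sig w \<longleftrightarrow> (\<forall>b\<in>B. b v = b w)" for v w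
    by (auto simp: sig_def fun_eq_iff)
  have "finite (range sig)" by simp
  then obtain h and n :: nat where h: "bij_betw (sig \<circ> h) {..<n} (range sig)"
    by (rule finite_range_enumeration)
  have "\<exists>i<n. \<forall>b\<in>B. b v = b (h i)" for v
  proof -
    have "sig v \<in> (sig \<circ> h) ` {..<n}" using h by (simp add: bij_betw_def)
    then show ?thesis by (auto simp: sig_eq)
  qed
  moreover have "i = j" if "i < n" "j < n" "\<forall>b\<in>B. b (h i) = b (h j)" for i j
    using h that by (auto simp: bij_betw_def inj_on_def sig_eq[symmetric])
  ultimately show thesis
    using that pointwise_subalgebra_eval_bij_betw[OF B] by blast
qed

definition vertex_part :: "(('v,'e) qpath \<Rightarrow> 'k) \<Rightarrow> 'v \<Rightarrow> 'k" where
  "vertex_part x v = x (v, [])"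

lemma vertex_part_pa_mult [simp]:
  "vertex_part (pa_mult src tgt x y) v = vertex_part x v * vertex_part y v"
  by (simp add: vertex_part_def pa_mult_def valid_path_def path_vertex_def)

lemma vertex_part_pa_add [simp]: "vertex_part (pa_add x y) v = vertex_part x v + vertex_part y v"
  by (simp add: vertex_part_def pa_add_def)

lemma vertex_part_pa_smult [simp]: "vertex_part (pa_smult c x) v = c * vertex_part x v"
  by (simp add: vertex_part_def pa_smult_def)

lemma vertex_part_pa_neg [simp]: "vertex_part (pa_neg x) v = - vertex_part x v"
  by (simp add: vertex_part_def pa_neg_def)

lemma vertex_part_zero [simp]: "vertex_part (\<lambda>_. 0) v = 0"
  by (simp add: vertex_part_def)

lemma vertex_part_pa_one [simp]: "vertex_part pa_one v = 1"
  by (simp add: vertex_part_def pa_one_def)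

lemma pa_mult_add_right:
  "pa_mult src tgt x (pa_add y z) = pa_add (pa_mult src tgt x y) (pa_mult src tgt x z)"
  by (auto simp: pa_mult_def pa_add_def fun_eq_iff distrib_left sum.distrib)

lemma pa_mult_one_right:
  fixes x :: "('v,'e) qpath \<Rightarrow> 'k::field"
  assumes "x \<in> path_alg src tgt"
  shows "pa_mult src tgt x pa_one = x"
proof
  fix p :: "('v,'e) qpath"
  obtain v as where p: "p = (v, as)" by (cases p)
  show "pa_mult src tgt x pa_one p = x p"
  proof (cases "valid_path src tgt p")
    case True
    have "(\<Sum>k\<le>length as. x (v, take k as) * pa_one (path_vertex tgt p k, drop k as))
        = (\<Sum>k\<le>length as. if k = length as then x p else 0)"
      by (rule sum.cong) (auto simp: pa_one_def p)
    with True show ?thesis by (simp add: pa_mult_def p)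
  next
    case False
    with assms have "x p = 0" unfolding path_alg_def by blast
    with False show ?thesis by (simp add: pa_mult_def)
  qed
qed

text \<open>Every term of \<open>(x e) p\<close> pairs a proper prefix of \<open>p\<close> with \<open>x\<close>, or the trivial path
  at the end of \<open>p\<close> with \<open>e\<close>.\<close>
lemma pa_mult_right_fixed_eq_zero:
  fixes x e :: "('v,'e) qpath \<Rightarrow> 'k::field"
  assumes e: "\<And>v. vertex_part e v = 0" and x: "pa_mult src tgt x e = x"
  shows "x = (\<lambda>_. 0)"
proof
  fix p :: "('v,'e) qpath"
  show "x p = 0"
  proof (induction "length (snd p)" arbitrary: p rule: less_induct)
    case less
    obtain v as where p: "p = (v, as)" by (cases p)
    have "x (v, take k as) * e (path_vertex tgt p k, drop k as) = 0" if "k \<le> length as" for k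
    proof (cases "k < length as")
      case True
      then show ?thesis using less[of "(v, take k as)"] p by simp
    next
      case False
      with that e show ?thesis by (simp add: vertex_part_def)
    qed
    then have "pa_mult src tgt x e p = 0" unfolding pa_mult_def p by (auto intro!: sum.neutral)
    with x show ?case by simp
  qed
qed

lemma
  assumes "unital_subalgebra src tgt A"
  shows unital_subalgebra_subset: "A \<subseteq> path_alg src tgt"
    and unital_subalgebra_zero: "(\<lambda>_. 0) \<in> A"
    and unital_subalgebra_one: "pa_one \<in> A"
    and unital_subalgebra_add: "x \<in> A \<Longrightarrow> y \<in> A \<Longrightarrow> pa_add x y \<in> A"
    and unital_subalgebra_smult: "x \<in> A \<Longrightarrow> pa_smult c x \<in> A"
    and unital_subalgebra_mult: "x \<in> A \<Longrightarrow> y \<in> A \<Longrightarrow> pa_mult src tgt x y \<in> A"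
  using assms unfolding unital_subalgebra_def by blast+

lemma unital_subalgebra_neg:
  assumes "unital_subalgebra src tgt A" and "x \<in> A"
  shows "pa_neg x \<in> A"
proof -
  have "pa_neg x = pa_smult (-1) x" by (simp add: fun_eq_iff pa_neg_def pa_smult_def)
  with unital_subalgebra_smult[OF assms] show ?thesis by simp
qed

lemma left_ideal_complement_right_unit:
  assumes A: "unital_subalgebra src tgt A"
    and K: "left_ideal_in src tgt A K" and L: "left_ideal_in src tgt A L"
    and KL: "K \<inter> L = {\<lambda>_. 0}" and decomp: "{pa_add x y | x y. x \<in> K \<and> y \<in> L} = A"
  shows "\<exists>e\<in>K. \<forall>x\<in>K. pa_mult src tgt x e = x"
proof -
  obtain e f where e: "e \<in> K" and f: "f \<in> L" and one: "pa_one = pa_add e f"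
    using unital_subalgebra_one[OF A] decomp by blast
  have "pa_mult src tgt x e = x" if x: "x \<in> K" for x
  proof -
    have xA: "x \<in> A" using x K by (auto simp: left_ideal_in_def)
    have "x = pa_mult src tgt x pa_one"
      using xA unital_subalgebra_subset[OF A] by (simp add: pa_mult_one_right subsetD)
    also have "\<dots> = pa_add (pa_mult src tgt x e) (pa_mult src tgt x f)"
      by (simp add: one pa_mult_add_right)
    finally have split: "x = pa_add (pa_mult src tgt x e) (pa_mult src tgt x f)" .
    have "pa_mult src tgt x f = pa_add x (pa_neg (pa_mult src tgt x e))"
    proof
      fix p
      show "pa_mult src tgt x f p = pa_add x (pa_neg (pa_mult src tgt x e)) p"
        using fun_cong[OF split, of p] by (simp add: pa_add_def pa_neg_def algebra_simps)
    qed
    moreover have "pa_mult src tgt x e \<in> K" using K xA e by (auto simp: left_ideal_in_def)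
    ultimately have "pa_mult src tgt x f \<in> K" using K x by (auto simp: left_ideal_in_def)
    moreover have "pa_mult src tgt x f \<in> L" using L xA f by (auto simp: left_ideal_in_def)
    ultimately have "pa_mult src tgt x f = (\<lambda>_. 0)" using KL by blast
    with split show ?thesis by (simp add: fun_eq_iff pa_add_def)
  qed
  with e show ?thesis by blast
qed

lemma left_ideal_vertex_part_kernel:
  assumes A: "unital_subalgebra src tgt A"
  shows "left_ideal_in src tgt A {x \<in> A. vertex_part x = (\<lambda>_. 0)}"
  using unital_subalgebra_zero[OF A] unital_subalgebra_add[OF A] unital_subalgebra_neg[OF A]
    unital_subalgebra_mult[OF A]
  by (auto simp: left_ideal_in_def fun_eq_iff)

lemma semisimple_inj_on_vertex_part:
  assumes A: "unital_subalgebra src tgt A" and SS: "semisimple_subalg src tgt A"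
  shows "inj_on vertex_part A"
proof (rule inj_onI)
  define K where "K = {x \<in> A. vertex_part x = (\<lambda>_. 0)}"
  have K: "left_ideal_in src tgt A K"
    unfolding K_def by (rule left_ideal_vertex_part_kernel[OF A])
  then obtain L where L: "left_ideal_in src tgt A L" and KL: "K \<inter> L = {\<lambda>_. 0}"
    and decomp: "{pa_add x y | x y. x \<in> K \<and> y \<in> L} = A"
    using SS[unfolded semisimple_subalg_def, rule_format, OF K] by blast
  obtain e where "e \<in> K" and e: "\<And>x. x \<in> K \<Longrightarrow> pa_mult src tgt x e = x"
    using left_ideal_complement_right_unit[OF A K L KL decomp] by blast
  then have e0: "vertex_part e v = 0" for v by (simp add: K_def)
  fix x y assume "x \<in> A" "y \<in> A" "vertex_part x = vertex_part y"
  then have "pa_add x (pa_neg y) \<in> K"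
    using unital_subalgebra_add[OF A] unital_subalgebra_neg[OF A]
    by (simp add: K_def fun_eq_iff)
  then have "pa_add x (pa_neg y) = (\<lambda>_. 0)"
    by (rule pa_mult_right_fixed_eq_zero[OF e0 e])
  then show "x = y" by (simp add: fun_eq_iff pa_add_def pa_neg_def)
qed

lemma unital_subalgebra_vertex_part:
  assumes A: "unital_subalgebra src tgt A"
  shows "pointwise_subalgebra (vertex_part ` A)"
  unfolding pointwise_subalgebra_def
proof (intro conjI ballI allI)
  show "(\<lambda>_. 1) \<in> vertex_part ` A"
    using unital_subalgebra_one[OF A] by (force simp: fun_eq_iff)
  fix b c assume "b \<in> vertex_part ` A" "c \<in> vertex_part ` A"
  then obtain x y where "x \<in> A" "y \<in> A" "b = vertex_part x" "c = vertex_part y" by blast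
  then show "(\<lambda>v. b v + c v) \<in> vertex_part ` A" "(\<lambda>v. b v * c v) \<in> vertex_part ` A"
    using unital_subalgebra_add[OF A] unital_subalgebra_mult[OF A]
    by (force simp: fun_eq_iff)+
next
  fix a b assume "b \<in> vertex_part ` A"
  then show "(\<lambda>v. a * b v) \<in> vertex_part ` A"
    using unital_subalgebra_smult[OF A] by (force simp: fun_eq_iff)
qed

theorem mainTheorem13:
  fixes src tgt :: "'e::finite \<Rightarrow> 'v::finite"
    and A :: "(('v,'e) qpath \<Rightarrow> 'k::field_char_0) set"
  assumes "alg_closed TYPE('k)"
    and US: "unital_subalgebra src tgt A"
    and SS: "semisimple_subalg src tgt A"
  shows "\<exists>n. iso_to_kn src tgt A n"
proof -
  obtain n :: nat and h
    where eval: "bij_betw (\<lambda>b i. if i < n then b (h i) else 0) (vertex_part ` A)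
      {u. \<forall>i\<ge>n. u i = (0::'k)}"
    by (rule pointwise_subalgebra_eval_bij[OF unital_subalgebra_vertex_part[OF US]])
  define \<phi> :: "(('v,'e) qpath \<Rightarrow> 'k) \<Rightarrow> nat \<Rightarrow> 'k"
    where "\<phi> = (\<lambda>b i. if i < n then b (h i) else 0) \<circ> vertex_part"
  have "bij_betw vertex_part A (vertex_part ` A)"
    by (rule inj_on_imp_bij_betw[OF semisimple_inj_on_vertex_part[OF US SS]])
  then have "bij_betw \<phi> A {u. \<forall>i\<ge>n. u i = 0}"
    unfolding \<phi>_def using eval by (rule bij_betw_trans)
  then have "iso_to_kn src tgt A n"
    unfolding iso_to_kn_def
    by (intro exI[of _ \<phi>] conjI ballI allI) (simp_all add: \<phi>_def fun_eq_iff)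
  then show ?thesis ..
qed

end
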